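(* If $(B,\beta_1,\ldots,\beta_B)$ is a feasible solution of problem (RO-$\Sigma$), then for all contests $c<c'$ with $c\equiv c'$, either $c\prec_{\beta_1\cdots\beta_B}c'$ or $c'\prec_{\beta_1\cdots\beta_B}c$.
   Context: A ballot style consists of contests $\mathcal{C}=\{1,\ldots,C\}$, candidates $\mathcal{N}=\{1,\ldots,N\}$ partitioned into nonempty sets $\mathcal{N}_c$ ($c\in\mathcal{C}$), and positive integers $v_c$. A filled-out ballot is a subset $\beta\subseteq\mathcal{N}$; $\mathscr{B}=\{\beta\subseteq\mathcal{N}: |\mathcal{N}_c\cap\beta|\le v_c\ \forall c\}$. For $i\in\mathcal{N}_c$: $T^*_i(\beta_1,\ldots,\beta_B)=\sum_{b=1}^B\mathbb{I}\{i\in\beta_b\text{ and }|\mathcal{N}_c\cap\beta_b|\le v_c\}$, and for a bijection $\sigma$ of $\mathcal{N}$, $T^\sigma_i(\beta_1,\ldots,\beta_B)=\sum_{b=1}^B\mathbb{I}\{\sigma(i)\in\beta_b\text{ and }|\{\sigma(j)\in\beta_b: j\in\mathcal{N}_c\}|\le v_c\}$. $\Sigma$ is the set of non-identity bijections $\mathcal{N}\to\mathcal{N}$. Problem (RO-$\Sigma$): minimize $B$ over $B\in\mathbb{N}$ and $\beta_1,\ldots,\beta_B\in\mathscr{B}$ subject to $T^\sigma(\beta_1,\ldots,\beta_B)\neq T^*(\beta_1,\ldots,\beta_B)$ for all $\sigma\in\Sigma$. Two contests $c,c'$ are equivalent, $c\equiv c'$, iff $|\mathcal{N}_c|=|\mathcal{N}_{c'}|$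 and $v_c=v_{c'}$. $\mathcal{N}_c^k$ denotes the candidate with the $k$-th smallest index in $\mathcal{N}_c$ ($k=1,\ldots,|\mathcal{N}_c|$). Write $n_b(i)=|\{b\in\{1,\ldots,B\}: i\in\beta_b\}|$. We write $c\prec_{\beta_1\cdots\beta_B}c'$ iff $c\equiv c'$ and there exists $k\in\{1,\ldots,|\mathcal{N}_c|\}$ with $n(\mathcal{N}_c^{m})=n(\mathcal{N}_{c'}^{m})$ for all $m\in\{k+1,\ldots,|\mathcal{N}_c|\}$ and $n(\mathcal{N}_c^{k})<n(\mathcal{N}_{c'}^{k})$, where $n(i)=|\{b\in\{1,\ldots,B\}: i\in\beta_b\}|$. *)

theory Defs
  imports Main
begin

text \<open>Ballot style: candidates {1..N}, contests {1..C}; con i is the contest of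
candidate i (this encodes the partition of candidates into the sets N_c);
v c is the number of allowed votes in contest c. Ballots beta_1..beta_B are
represented as a list bs with B = length bs, beta_b = bs ! (b-1).\<close>

definition cands :: "nat \<Rightarrow> (nat \<Rightarrow> nat) \<Rightarrow> nat \<Rightarrow> nat set" where
  "cands N con c = {i \<in> {1..N}. con i = c}"

definition ballot_style :: "nat \<Rightarrow> nat \<Rightarrow> (nat \<Rightarrow> nat) \<Rightarrow> (nat \<Rightarrow> nat) \<Rightarrow> bool" where
  "ballot_style N C con v \<longleftrightarrow>
     (\<forall>i\<in>{1..N}. con i \<in> {1..C}) \<and>
     (\<forall>c\<in>{1..C}. cands N con c \<noteq> {}) \<and>
     (\<forall>c\<in>{1..C}. 0 < v c)"

definition valid_ballot :: "nat \<Rightarrow> nat \<Rightarrow> (nat \<Rightarrow> nat) \<Rightarrow> (nat \<Rightarrow> nat) \<Rightarrow> nat set \<Rightarrow> bool" where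
  "valid_ballot N C con v \<beta> \<longleftrightarrow>
     \<beta> \<subseteq> {1..N} \<and> (\<forall>c\<in>{1..C}. card (cands N con c \<inter> \<beta>) \<le> v c)"

definition Tstar :: "nat \<Rightarrow> (nat \<Rightarrow> nat) \<Rightarrow> (nat \<Rightarrow> nat) \<Rightarrow> nat set list \<Rightarrow> nat \<Rightarrow> nat" where
  "Tstar N con v bs i = card {b. b < length bs \<and> i \<in> bs ! b \<and>
       card (cands N con (con i) \<inter> bs ! b) \<le> v (con i)}"

definition Tsig :: "nat \<Rightarrow> (nat \<Rightarrow> nat) \<Rightarrow> (nat \<Rightarrow> nat) \<Rightarrow> nat set list \<Rightarrow> (nat \<Rightarrow> nat) \<Rightarrow> nat \<Rightarrow> nat" where
  "Tsig N con v bs \<sigma> i = card {b. b < length bs \<and> \<sigma> i \<in> bs ! b \<and>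
       card {\<sigma> j | j. j \<in> cands N con (con i) \<and> \<sigma> j \<in> bs ! b} \<le> v (con i)}"

definition feasible :: "nat \<Rightarrow> nat \<Rightarrow> (nat \<Rightarrow> nat) \<Rightarrow> (nat \<Rightarrow> nat) \<Rightarrow> nat set list \<Rightarrow> bool" where
  "feasible N C con v bs \<longleftrightarrow>
     (\<forall>\<beta>\<in>set bs. valid_ballot N C con v \<beta>) \<and>
     (\<forall>\<sigma>. bij_betw \<sigma> {1..N} {1..N} \<and> (\<exists>i\<in>{1..N}. \<sigma> i \<noteq> i) \<longrightarrow>
        (\<exists>i\<in>{1..N}. Tsig N con v bs \<sigma> i \<noteq> Tstar N con v bs i))"

definition contest_equiv :: "nat \<Rightarrow> (nat \<Rightarrow> nat) \<Rightarrow> (nat \<Rightarrow> nat) \<Rightarrow> nat \<Rightarrow> nat \<Rightarrow> bool" where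
  "contest_equiv N con v c c' \<longleftrightarrow>
     card (cands N con c) = card (cands N con c') \<and> v c = v c'"

definition kth_cand :: "nat \<Rightarrow> (nat \<Rightarrow> nat) \<Rightarrow> nat \<Rightarrow> nat \<Rightarrow> nat" where
  "kth_cand N con c k = sorted_list_of_set (cands N con c) ! (k - 1)"

definition nb :: "nat set list \<Rightarrow> nat \<Rightarrow> nat" where
  "nb bs i = card {b. b < length bs \<and> i \<in> bs ! b}"

definition contest_prec :: "nat \<Rightarrow> (nat \<Rightarrow> nat) \<Rightarrow> (nat \<Rightarrow> nat) \<Rightarrow> nat set list \<Rightarrow> nat \<Rightarrow> nat \<Rightarrow> bool" where
  "contest_prec N con v bs c c' \<longleftrightarrow>
     contest_equiv N con v c c' \<and>
     (\<exists>k\<in>{1..card (cands N con c)}.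
        (\<forall>m\<in>{k+1..card (cands N con c)}.
            nb bs (kth_cand N con c m) = nb bs (kth_cand N con c' m)) \<and>
        nb bs (kth_cand N con c k) < nb bs (kth_cand N con c' k))"

end

theory Submission
  imports Defs
begin

text \<open>Read off from the last position at which they differ, the sorted count profiles
of two equivalent contests are ordered one way or the other. They cannot coincide:
otherwise swapping the k-th candidate of one contest with the k-th candidate of the
other, for every k, is a non-identity permutation that maps contests onto contests
with the same number of votes and preserves every count n(i). Since all ballots are
valid, it then leaves every tally unchanged, contradicting feasibility.\<close>

lemma last_difference:
  fixes f g :: "nat \<Rightarrow> 'a"
  assumes "\<exists>k\<in>{1..n}. f k \<noteq> g k"
  obtains k where "k \<in> {1..n}" "f k \<noteq> g k" "\<forall>m\<in>{k+1..n}. f m = g m"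
proof -
  define K where "K = {k \<in> {1..n}. f k \<noteq> g k}"
  have "finite K" "K \<noteq> {}" using assms unfolding K_def by auto
  then have "Max K \<in> K" and Max_ge: "\<And>m. m \<in> K \<Longrightarrow> m \<le> Max K" by auto
  moreover have "f m = g m" if "m \<in> {Max K + 1..n}" for m
    using that Max_ge[of m] unfolding K_def by fastforce
  ultimately show thesis using that unfolding K_def by blast
qed

definition list_swap :: "'a list \<Rightarrow> 'a list \<Rightarrow> 'a \<Rightarrow> 'a" where
  "list_swap xs ys x =
     (if x \<in> set xs then ys ! (THE p. p < length xs \<and> xs ! p = x)
      else if x \<in> set ys then xs ! (THE p. p < length ys \<and> ys ! p = x)
      else x)"

lemma the_index_nth:
  assumes "distinct xs" "p < length xs"
  shows "(THE q. q < length xs \<and> xs ! q = xs ! p) = p"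
  using assms by (intro the_equality) (auto simp: nth_eq_iff_index_eq)

lemma list_swap_outside: "x \<notin> set xs \<Longrightarrow> x \<notin> set ys \<Longrightarrow> list_swap xs ys x = x"
  unfolding list_swap_def by simp

context
  fixes xs ys :: "'a list"
  assumes distinct: "distinct xs" "distinct ys"
    and same_length: "length xs = length ys"
    and disjoint: "set xs \<inter> set ys = {}"
begin

lemma list_swap_nth_left: "p < length xs \<Longrightarrow> list_swap xs ys (xs ! p) = ys ! p"
  using distinct the_index_nth[of xs p] unfolding list_swap_def by simp

lemma list_swap_nth_right: "p < length ys \<Longrightarrow> list_swap xs ys (ys ! p) = xs ! p"
proof -
  assume p: "p < length ys"
  then have "ys ! p \<notin> set xs" using disjoint nth_mem by fastforce
  then show ?thesis using p distinct the_index_nth[of ys p] unfolding list_swap_def by simp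
qed

lemma list_swap_involution: "list_swap xs ys (list_swap xs ys x) = x"
proof -
  consider "x \<in> set xs" | "x \<in> set ys" | "x \<notin> set xs" "x \<notin> set ys" by blast
  then show ?thesis
  proof cases
    case 1
    then obtain p where "p < length xs" "x = xs ! p" by (metis in_set_conv_nth)
    then show ?thesis using same_length by (simp add: list_swap_nth_left list_swap_nth_right)
  next
    case 2
    then obtain p where "p < length ys" "x = ys ! p" by (metis in_set_conv_nth)
    then show ?thesis using same_length by (simp add: list_swap_nth_left list_swap_nth_right)
  qed (simp add: list_swap_outside)
qed

lemma map_list_swap_left: "map (list_swap xs ys) xs = ys"
  by (rule nth_equalityI) (simp_all add: same_length list_swap_nth_left)

lemma list_swap_image_left: "list_swap xs ys ` set xs = set ys"
  using arg_cong[OF map_list_swap_left, of set] by simp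

lemma list_swap_image_right: "list_swap xs ys ` set ys = set xs"
  using arg_cong[OF list_swap_image_left, of "image (list_swap xs ys)"]
  by (simp add: image_image list_swap_involution)

lemma bij_betw_list_swap:
  assumes "set xs \<union> set ys \<subseteq> S"
  shows "bij_betw (list_swap xs ys) S S"
proof -
  have maps: "list_swap xs ys ` S \<subseteq> S"
  proof
    fix y assume "y \<in> list_swap xs ys ` S"
    then obtain x where x: "x \<in> S" "y = list_swap xs ys x" by blast
    consider "x \<in> set xs" | "x \<in> set ys" | "x \<notin> set xs" "x \<notin> set ys" by blast
    then show "y \<in> S"
    proof cases
      case 1
      then have "y \<in> set ys" using x(2) list_swap_image_left by blast
      then show ?thesis using assms by blast
    next
      case 2
      then have "y \<in> set xs" using x(2) list_swap_image_right by blast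
      then show ?thesis using assms by blast
    qed (simp add: x list_swap_outside)
  qed
  then show ?thesis
    by (intro bij_betw_byWitness[where f' = "list_swap xs ys"]) (simp_all add: list_swap_involution)
qed

end

lemma Tstar_eq_nb:
  assumes "\<forall>\<beta>\<in>set bs. valid_ballot N C con v \<beta>" and "con i \<in> {1..C}"
  shows "Tstar N con v bs i = nb bs i"
proof -
  have "card (cands N con (con i) \<inter> bs ! b) \<le> v (con i)" if "b < length bs" for b
  proof -
    have "valid_ballot N C con v (bs ! b)" using assms(1) that by simp
    then show ?thesis using assms(2) unfolding valid_ballot_def by blast
  qed
  then have "{b. b < length bs \<and> i \<in> bs ! b \<and> card (cands N con (con i) \<inter> bs ! b) \<le> v (con i)}
      = {b. b < length bs \<and> i \<in> bs ! b}" by blast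
  then show ?thesis unfolding Tstar_def nb_def by simp
qed

lemma Tsig_eq_nb:
  assumes valid: "\<forall>\<beta>\<in>set bs. valid_ballot N C con v \<beta>"
    and image: "\<sigma> ` cands N con (con i) = cands N con d"
    and "d \<in> {1..C}" and "v d = v (con i)"
  shows "Tsig N con v bs \<sigma> i = nb bs (\<sigma> i)"
proof -
  have "card {\<sigma> j | j. j \<in> cands N con (con i) \<and> \<sigma> j \<in> bs ! b} \<le> v (con i)"
    if "b < length bs" for b
  proof -
    have "valid_ballot N C con v (bs ! b)" using valid that by simp
    have "{\<sigma> j | j. j \<in> cands N con (con i) \<and> \<sigma> j \<in> bs ! b}
        = \<sigma> ` cands N con (con i) \<inter> bs ! b" by blast
    then have "card {\<sigma> j | j. j \<in> cands N con (con i) \<and> \<sigma> j \<in> bs ! b}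
        = card (cands N con d \<inter> bs ! b)" by (simp only: image)
    also have "\<dots> \<le> v d"
      using \<open>valid_ballot N C con v (bs ! b)\<close> assms(3) unfolding valid_ballot_def by blast
    finally show ?thesis using assms(4) by simp
  qed
  then have "{b. b < length bs \<and> \<sigma> i \<in> bs ! b \<and>
        card {\<sigma> j | j. j \<in> cands N con (con i) \<and> \<sigma> j \<in> bs ! b} \<le> v (con i)}
      = {b. b < length bs \<and> \<sigma> i \<in> bs ! b}" by blast
  then show ?thesis unfolding Tsig_def nb_def by simp
qed

lemma feasible_perm_changes_counts:
  assumes "ballot_style N C con v" and "feasible N C con v bs"
    and "bij_betw \<sigma> {1..N} {1..N}" and "\<exists>i\<in>{1..N}. \<sigma> i \<noteq> i"
    and contests: "\<forall>i\<in>{1..N}. \<exists>d\<in>{1..C}.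
          \<sigma> ` cands N con (con i) = cands N con d \<and> v d = v (con i)"
  shows "\<exists>i\<in>{1..N}. nb bs (\<sigma> i) \<noteq> nb bs i"
proof -
  have valid: "\<forall>\<beta>\<in>set bs. valid_ballot N C con v \<beta>"
    and "\<exists>i\<in>{1..N}. Tsig N con v bs \<sigma> i \<noteq> Tstar N con v bs i"
    using assms(2-4) unfolding feasible_def by simp_all
  then obtain i where i: "i \<in> {1..N}" "Tsig N con v bs \<sigma> i \<noteq> Tstar N con v bs i"
    by blast
  have "Tstar N con v bs i = nb bs i"
    using Tstar_eq_nb[OF valid] assms(1) i(1) unfolding ballot_style_def by blast
  moreover have "Tsig N con v bs \<sigma> i = nb bs (\<sigma> i)"
    using Tsig_eq_nb[OF valid] contests i(1) by blast
  ultimately show ?thesis using i by auto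
qed

lemma contest_equiv_sym: "contest_equiv N con v c c' \<Longrightarrow> contest_equiv N con v c' c"
  unfolding contest_equiv_def by simp

lemma contest_prec_if_counts_differ:
  assumes equiv: "contest_equiv N con v c c'"
    and "\<exists>k\<in>{1..card (cands N con c)}. nb bs (kth_cand N con c k) \<noteq> nb bs (kth_cand N con c' k)"
  shows "contest_prec N con v bs c c' \<or> contest_prec N con v bs c' c"
proof -
  obtain k where k: "k \<in> {1..card (cands N con c)}"
    "nb bs (kth_cand N con c k) \<noteq> nb bs (kth_cand N con c' k)"
    "\<forall>m\<in>{k+1..card (cands N con c)}. nb bs (kth_cand N con c m) = nb bs (kth_cand N con c' m)"
    using assms(2) by (rule last_difference)
  have card: "card (cands N con c') = card (cands N con c)"
    using equiv unfolding contest_equiv_def by simp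
  show ?thesis
  proof (cases "nb bs (kth_cand N con c k) < nb bs (kth_cand N con c' k)")
    case True
    then have "contest_prec N con v bs c c'"
      using k equiv unfolding contest_prec_def by blast
    then show ?thesis ..
  next
    case False
    then have "nb bs (kth_cand N con c' k) < nb bs (kth_cand N con c k)"
      using k(2) by simp
    moreover have "\<forall>m\<in>{k+1..card (cands N con c')}. nb bs (kth_cand N con c' m) = nb bs (kth_cand N con c m)"
      using k(3) card by simp
    ultimately have "contest_prec N con v bs c' c"
      using k(1) card contest_equiv_sym[OF equiv] unfolding contest_prec_def by auto
    then show ?thesis ..
  qed
qed

lemma counts_differ_if_feasible:
  assumes style: "ballot_style N C con v" and feasible: "feasible N C con v bs"
    and c: "c \<in> {1..C}" and c': "c' \<in> {1..C}" and "c \<noteq> c'"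
    and equiv: "contest_equiv N con v c c'"
  shows "\<exists>k\<in>{1..card (cands N con c)}. nb bs (kth_cand N con c k) \<noteq> nb bs (kth_cand N con c' k)"
proof (rule ccontr)
  assume "\<not> ?thesis"
  then have same_counts:
    "\<forall>k\<in>{1..card (cands N con c)}. nb bs (kth_cand N con c k) = nb bs (kth_cand N con c' k)"
    by blast
  define xs where "xs = sorted_list_of_set (cands N con c)"
  define ys where "ys = sorted_list_of_set (cands N con c')"
  define \<sigma> where "\<sigma> = list_swap xs ys"
  have fin: "finite (cands N con d)" for d unfolding cands_def by simp
  have sets: "set xs = cands N con c" "set ys = cands N con c'"
    using fin unfolding xs_def ys_def by simp_all
  have in_range: "set xs \<union> set ys \<subseteq> {1..N}" using sets unfolding cands_def by auto
  have length_xs: "length xs = card (cands N con c)" unfolding xs_def by simp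
  have "cands N con c \<inter> cands N con c' = {}" using \<open>c \<noteq> c'\<close> unfolding cands_def by auto
  then have swap: "distinct xs" "distinct ys" "length xs = length ys" "set xs \<inter> set ys = {}"
    using equiv sets unfolding xs_def ys_def contest_equiv_def by simp_all
  have counts: "nb bs (xs ! p) = nb bs (ys ! p)" if "p < length xs" for p
  proof -
    have "Suc p \<in> {1..card (cands N con c)}" using that length_xs by simp
    then show ?thesis using same_counts unfolding kth_cand_def xs_def ys_def by fastforce
  qed
  have "cands N con c \<noteq> {}" using style c unfolding ballot_style_def by blast
  then have nonempty: "xs \<noteq> []" using sets(1) by auto
  then have first: "xs ! 0 \<in> set xs" "ys ! 0 \<in> set ys"
    using swap(3) by (auto intro!: nth_mem)
  moreover have "\<sigma> (xs ! 0) = ys ! 0"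
    using list_swap_nth_left[OF swap, of 0] nonempty unfolding \<sigma>_def by simp
  ultimately have moved: "\<sigma> (xs ! 0) \<noteq> xs ! 0" using swap(4) by (metis IntI empty_iff)
  have bij: "bij_betw \<sigma> {1..N} {1..N}"
    unfolding \<sigma>_def using bij_betw_list_swap[OF swap in_range] .
  have contests: "\<exists>d\<in>{1..C}. \<sigma> ` cands N con (con i) = cands N con d \<and> v d = v (con i)"
    if "i \<in> {1..N}" for i
  proof -
    consider "con i = c" | "con i = c'" | "con i \<noteq> c" "con i \<noteq> c'" by blast
    then show ?thesis
    proof cases
      case 1
      then show ?thesis using c' equiv list_swap_image_left[OF swap] sets
        unfolding \<sigma>_def contest_equiv_def by auto
    next
      case 2
      then show ?thesis using c equiv list_swap_image_right[OF swap] sets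
        unfolding \<sigma>_def contest_equiv_def by auto
    next
      case 3
      have "\<sigma> j = j" if "j \<in> cands N con (con i)" for j
      proof -
        have "j \<notin> set xs" "j \<notin> set ys" using that 3 sets unfolding cands_def by auto
        then show ?thesis unfolding \<sigma>_def by (rule list_swap_outside)
      qed
      then have "\<sigma> ` cands N con (con i) = id ` cands N con (con i)" by (intro image_cong) simp_all
      then have "\<sigma> ` cands N con (con i) = cands N con (con i)" by simp
      moreover have "con i \<in> {1..C}" using style that unfolding ballot_style_def by blast
      ultimately show ?thesis by blast
    qed
  qed
  have "nb bs (\<sigma> i) = nb bs i" for i
  proof -
    consider "i \<in> set xs" | "i \<in> set ys" | "i \<notin> set xs" "i \<notin> set ys" by blast
    then show ?thesis
    proof cases
      case 1
      then obtain p where "p < length xs" "i = xs ! p" by (metis in_set_conv_nth)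
      then show ?thesis using counts list_swap_nth_left[OF swap] unfolding \<sigma>_def by simp
    next
      case 2
      then obtain p where "p < length ys" "i = ys ! p" by (metis in_set_conv_nth)
      then show ?thesis using counts swap(3) list_swap_nth_right[OF swap] unfolding \<sigma>_def by simp
    qed (simp add: \<sigma>_def list_swap_outside)
  qed
  moreover have "xs ! 0 \<in> {1..N}" using first in_range by blast
  ultimately show False
    using feasible_perm_changes_counts[OF style feasible bij _ ballI[OF contests]] moved by blast
qed

theorem lemma3:
  fixes N C :: nat and con v :: "nat \<Rightarrow> nat" and bs :: "nat set list" and c c' :: nat
  assumes "ballot_style N C con v"
    and "feasible N C con v bs"
    and "c \<in> {1..C}" and "c' \<in> {1..C}" and "c < c'"
    and "contest_equiv N con v c c'"
  shows "contest_prec N con v bs c c' \<or> contest_prec N con v bs c' c"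
proof (rule contest_prec_if_counts_differ)
  show "contest_equiv N con v c c'" by (fact assms(6))
  show "\<exists>k\<in>{1..card (cands N con c)}. nb bs (kth_cand N con c k) \<noteq> nb bs (kth_cand N con c' k)"
    using assms by (intro counts_differ_if_feasible) auto
qed

end
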